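(* Let $\mathscr X\in\mathbb R^{I_1\times\cdots\times I_N}$ be a nonzero tensor, and set $R_n=\operatorname{rank}(\mathbf X_{(n)})$ for $1\leq n\leq N$. Then $\mathscr X$ has a subtensor $\mathscr Y\in\mathbb R^{R_1\times\cdots\times R_N}$ with $\operatorname{rank}(\mathbf Y_{(n)})=R_n$ for all $1\leq n\leq N$.
   Context: All tensors are real. For $\mathscr X\in\mathbb R^{I_1\times\cdots\times I_N}$, the mode-$n$ unfolding $\mathbf X_{(n)}$ is the $I_n\times\prod_{k\neq n}I_k$ matrix whose rows are indexed by $i_n$ and whose columns are exactly the vectors obtained from $\mathscr X$ by fixing all indices other than $i_n$. A subtensor of $\mathscr X$ is a tensor $\mathscr Y\in\mathbb R^{J_1\times\cdots\times J_N}$ with $1\le J_n\le I_n$ of the form $y_{j_1\cdots j_N}=x_{i_{1j_1}\cdots i_{Nj_N}}$ for some indices $1\leq i_{n1}<\cdots<i_{nJ_n}\leq I_n$, $1\le n\le N$. *)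

theory Defs
  imports Main "Jordan_Normal_Form.DL_Rank"
begin

text \<open>An order-N real tensor of size I_1 x ... x I_N is a function on multi-indices
  (lists of length N, 0-based entries i!k < dims!k); dims is the list [I_1,...,I_N].
  Values outside the index box are irrelevant.\<close>

definition multi_index :: "nat list \<Rightarrow> nat list \<Rightarrow> bool" where
  "multi_index dims i \<longleftrightarrow> length i = length dims \<and> (\<forall>k<length dims. i ! k < dims ! k)"

text \<open>Mode-n unfolding: an I_n x (prod_{k /= n} I_k) matrix; the column index c is decoded
  into the remaining indices in mixed radix (lower modes varying fastest, Kolda convention).\<close>

definition unfold_col_index :: "nat list \<Rightarrow> nat \<Rightarrow> nat \<Rightarrow> nat \<Rightarrow> nat" where
  "unfold_col_index dims n c k = (c div (\<Prod>l\<in>{..<k} - {n}. dims ! l)) mod (dims ! k)"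

definition mode_unfolding :: "nat list \<Rightarrow> (nat list \<Rightarrow> real) \<Rightarrow> nat \<Rightarrow> real mat" where
  "mode_unfolding dims X n =
     mat (dims ! n) (\<Prod>k\<in>{..<length dims} - {n}. dims ! k)
       (\<lambda>(r, c). X (map (\<lambda>k. if k = n then r else unfold_col_index dims n c k) [0..<length dims]))"

definition mat_rank :: "real mat \<Rightarrow> nat" where
  "mat_rank A = vec_space.rank (dim_row A) A"

end

(* Work one mode at a time. For mode m, pick among the mode-m slices of the tensor a
   linearly independent family that spans all of them, say the slices sigma 0 < ... < sigma (K-1),
   and restrict mode m to these indices. The mode-m unfolding of the restricted tensor consists
   of K independent rows spanning the row space of the original unfolding, so both have rank K
   (row rank = column rank, which we get from a Gram matrix); hence K = R_m. For any other mode k,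
   every mode-k fiber of the restricted tensor is a fiber of the original one, and every fiber of
   the original is a combination of restricted fibers with the slice coefficients, so the two
   mode-k unfoldings have the same column space. Repeating this for all modes yields the
   subtensor. *)

theory Submission
  imports Defs "Jordan_Normal_Form.DL_Missing_Sublist"
begin

section \<open>Linear algebra\<close>

context vec_space
begin

lemma mult_mat_vec_in_span_cols:
  assumes "A \<in> carrier_mat n nc" and "x \<in> carrier_vec nc"
  shows "A *\<^sub>v x \<in> span (set (cols A))"
  using col_space_eq[OF assms(1)] assms unfolding col_space_def by auto

lemma rank_le_of_cols_subset_span:
  assumes A: "A \<in> carrier_mat n a" and B: "B \<in> carrier_mat n b"
    and sub: "set (cols A) \<subseteq> span (set (cols B))"
  shows "rank A \<le> rank B"
proof -
  have cA: "set (cols A) \<subseteq> carrier_vec n" and cB: "set (cols B) \<subseteq> carrier_vec n"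
    using A B cols_dim by blast+
  have sB: "subspace class_ring (span (set (cols B))) V"
    using span_is_subspace[OF cB] .
  have "subspace class_ring (span (set (cols A))) (vs (span (set (cols B))))"
    using nested_subspaces[OF sB span_is_subspace[OF cA] span_subsetI[OF cB sub]] .
  then show ?thesis
    unfolding rank_def
    using vectorspace.subspace_dim[OF subspace_is_vs[OF sB] _ fin_dim_span_cols[OF B]]
      fin_dim_span_cols[OF A] by auto
qed

lemma rank_le_dim_row:
  assumes "A \<in> carrier_mat n nc"
  shows "rank A \<le> n"
proof -
  have "set (cols A) \<subseteq> carrier_vec n" using assms cols_dim by blast
  then show ?thesis
    unfolding rank_def
    using subspace_dim[OF span_is_subspace fin_dim fin_dim_span_cols[OF assms]] dim_is_n by simp
qed

lemma rank_mult_le_left: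
  assumes A: "A \<in> carrier_mat n p" and C: "C \<in> carrier_mat p q"
  shows "rank (A * C) \<le> rank A"
proof -
  have "set (cols (A * C)) \<subseteq> span (set (cols A))"
  proof
    fix y assume "y \<in> set (cols (A * C))"
    then obtain j where j: "j < q" and "y = col (A * C) j" using A C by (auto simp: in_set_conv_nth)
    then have "y = A *\<^sub>v col C j" using A C by (simp add: mult_mat_vec_def)
    moreover have "col C j \<in> carrier_vec p" using C by (intro carrier_vecI) simp
    ultimately show "y \<in> span (set (cols A))" using mult_mat_vec_in_span_cols[OF A] by simp
  qed
  then show ?thesis by (rule rank_le_of_cols_subset_span[OF mult_carrier_mat[OF A C] A])
qed

lemma rank_eq_dim_col_if_mult_inj:
  assumes M: "M \<in> carrier_mat n k"
    and inj: "\<And>v. v \<in> carrier_vec k \<Longrightarrow> M *\<^sub>v v = 0\<^sub>v n \<Longrightarrow> v = 0\<^sub>v k"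
  shows "rank M = k"
proof -
  have distinct: "distinct (cols M)"
  proof (rule ccontr)
    assume "\<not> distinct (cols M)"
    then obtain i j where ij: "i \<noteq> j" "i < k" "j < k" "col M i = col M j"
      using M by (auto simp: distinct_conv_nth)
    let ?v = "unit_vec k i - unit_vec k j :: 'a vec"
    have "row M r \<bullet> ?v = 0" if "r < n" for r
    proof -
      have "row M r \<in> carrier_vec k" using M by (intro carrier_vecI) auto
      then have "row M r \<bullet> ?v = row M r $ i - row M r $ j"
        using ij by (simp add: scalar_prod_minus_distrib)
      also have "\<dots> = col M i $ r - col M j $ r" using M ij(2,3) that by simp
      finally show ?thesis using ij(4) by simp
    qed
    then have "M *\<^sub>v ?v = 0\<^sub>v n" using M by (intro eq_vecI) auto
    then have "?v $ i = 0" using inj[of ?v] ij by simp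
    moreover have "?v $ i = 1" using ij by simp
    ultimately show False by simp
  qed
  have "lin_indpt (set (cols M))"
    using lin_depE[OF M _ distinct] inj by metis
  then show ?thesis using lin_indpt_full_rank[OF M distinct] by blast
qed

end

lemma transpose_mult_vec_eq_0_if_gram:
  fixes B :: "real mat"
  assumes B: "B \<in> carrier_mat n p" and y: "y \<in> carrier_vec n"
    and gram: "B *\<^sub>v (B\<^sup>T *\<^sub>v y) = 0\<^sub>v n"
  shows "B\<^sup>T *\<^sub>v y = 0\<^sub>v p"
proof -
  have w: "B\<^sup>T *\<^sub>v y \<in> carrier_vec p" using B by (intro carrier_vecI) simp
  have "(B\<^sup>T *\<^sub>v y) \<bullet> (B\<^sup>T *\<^sub>v y) = y \<bullet> (B *\<^sub>v (B\<^sup>T *\<^sub>v y))"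
    using transpose_vec_mult_scalar[OF B w y] by simp
  also have "\<dots> = 0" using gram y by simp
  finally show ?thesis using conjugate_square_eq_0_vec[OF w] by simp
qed

text \<open>Row rank is at most column rank: the Gram matrix \<open>B B\<^sup>T\<close> of the selected rows
  \<open>B\<close> is nonsingular, so the \<open>K\<close> columns of \<open>A B\<^sup>T\<close> are independent, and they lie in
  the column space of \<open>A\<close>.\<close>

lemma card_le_rank_if_rows_indpt:
  fixes A :: "real mat"
  assumes A: "A \<in> carrier_mat n p" and \<sigma>: "\<And>t. t < K \<Longrightarrow> \<sigma> t < n"
    and indpt: "\<And>v. v \<in> carrier_vec K \<Longrightarrow>
      (\<And>x. x \<in> set (cols A) \<Longrightarrow> (\<Sum>t<K. v $ t * x $ \<sigma> t) = 0) \<Longrightarrow> v = 0\<^sub>v K"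
  shows "K \<le> vec_space.rank n A"
proof -
  interpret vec_space "TYPE(real)" n .
  define B where "B = mat K p (\<lambda>(t, c). A $$ (\<sigma> t, c))"
  have B: "B \<in> carrier_mat K p" unfolding B_def by simp
  have M: "A * B\<^sup>T \<in> carrier_mat n K" using A B by simp
  have "rank (A * B\<^sup>T) = K"
  proof (rule rank_eq_dim_col_if_mult_inj[OF M])
    fix v assume v: "v \<in> carrier_vec K" and Mv: "(A * B\<^sup>T) *\<^sub>v v = 0\<^sub>v n"
    have "B *\<^sub>v (B\<^sup>T *\<^sub>v v) = 0\<^sub>v K"
    proof (rule eq_vecI)
      fix t assume "t < dim_vec (0\<^sub>v K)"
      then have t: "t < K" by simp
      have "row B t = row A (\<sigma> t)"
        using A \<sigma>[OF t] t by (intro eq_vecI) (auto simp: B_def)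
      then have "(B *\<^sub>v (B\<^sup>T *\<^sub>v v)) $ t = (A *\<^sub>v (B\<^sup>T *\<^sub>v v)) $ \<sigma> t"
        using A B t \<sigma>[OF t] by simp
      also have "\<dots> = 0" using Mv A B v \<sigma>[OF t] by (simp flip: assoc_mult_mat_vec)
      finally show "(B *\<^sub>v (B\<^sup>T *\<^sub>v v)) $ t = 0\<^sub>v K $ t" using t by simp
    qed (use B in simp)
    then have BTv: "B\<^sup>T *\<^sub>v v = 0\<^sub>v p"
      using transpose_mult_vec_eq_0_if_gram[OF B v] by simp
    show "v = 0\<^sub>v K"
    proof (rule indpt[OF v])
      fix x assume "x \<in> set (cols A)"
      then obtain c where c: "c < p" "x = col A c" using A by (auto simp: in_set_conv_nth)
      have "(\<Sum>t<K. v $ t * x $ \<sigma> t) = (B\<^sup>T *\<^sub>v v) $ c"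
        using A B v c \<sigma> by (auto simp: scalar_prod_def B_def lessThan_atLeast0 mult.commute
          intro!: sum.cong)
      then show "(\<Sum>t<K. v $ t * x $ \<sigma> t) = 0" using BTv c by simp
    qed
  qed
  moreover have "rank (A * B\<^sup>T) \<le> rank A" using rank_mult_le_left[OF A] B by simp
  ultimately show ?thesis by simp
qed

lemma lincomb_remove_dependent:
  fixes a :: "nat \<Rightarrow> 'c \<Rightarrow> 'a::field"
  assumes S: "finite S" "s\<^sub>0 \<in> S" and y: "y s\<^sub>0 \<noteq> 0"
    and dep: "\<And>c. c \<in> C \<Longrightarrow> (\<Sum>s\<in>S. y s * a s c) = 0"
  shows "\<exists>co'. \<forall>c\<in>C. (\<Sum>s\<in>S. co s * a s c) = (\<Sum>s\<in>S - {s\<^sub>0}. co' s * a s c)"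
proof (intro exI ballI)
  fix c assume c: "c \<in> C"
  have split: "(\<Sum>s\<in>S. f s) = f s\<^sub>0 + (\<Sum>s\<in>S - {s\<^sub>0}. f s)" for f :: "nat \<Rightarrow> 'a"
    using S by (simp add: sum.remove)
  have "(\<Sum>s\<in>S - {s\<^sub>0}. y s * a s c) = - (y s\<^sub>0 * a s\<^sub>0 c)"
    using dep[OF c] split[of "\<lambda>s. y s * a s c"] by (simp add: eq_neg_iff_add_eq_0 add.commute)
  moreover have "(\<Sum>s\<in>S - {s\<^sub>0}. (co s - co s\<^sub>0 * y s / y s\<^sub>0) * a s c)
      = (\<Sum>s\<in>S - {s\<^sub>0}. co s * a s c) - co s\<^sub>0 / y s\<^sub>0 * (\<Sum>s\<in>S - {s\<^sub>0}. y s * a s c)"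
    by (simp add: algebra_simps sum_subtractf sum_distrib_left)
  ultimately have "(\<Sum>s\<in>S - {s\<^sub>0}. (co s - co s\<^sub>0 * y s / y s\<^sub>0) * a s c)
      = (\<Sum>s\<in>S - {s\<^sub>0}. co s * a s c) + co s\<^sub>0 * a s\<^sub>0 c"
    using y by simp
  also have "\<dots> = (\<Sum>s\<in>S. co s * a s c)" using split[of "\<lambda>s. co s * a s c"] by simp
  finally show "(\<Sum>s\<in>S. co s * a s c) = (\<Sum>s\<in>S - {s\<^sub>0}. (co s - co s\<^sub>0 * y s / y s\<^sub>0) * a s c)"
    by simp
qed

lemma exists_independent_spanning_rows:
  fixes a :: "nat \<Rightarrow> 'c \<Rightarrow> 'a::field"
  obtains S where "S \<subseteq> {..<n}"
    and "\<And>i. i < n \<Longrightarrow> \<exists>co. \<forall>c\<in>C. a i c = (\<Sum>s\<in>S. co s * a s c)"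
    and "\<And>y. (\<And>c. c \<in> C \<Longrightarrow> (\<Sum>s\<in>S. y s * a s c) = 0) \<Longrightarrow> \<forall>s\<in>S. y s = 0"
proof -
  define spanning where
    "spanning S \<longleftrightarrow> S \<subseteq> {..<n} \<and> (\<forall>i<n. \<exists>co. \<forall>c\<in>C. a i c = (\<Sum>s\<in>S. co s * a s c))" for S
  have "spanning {..<n}"
    unfolding spanning_def
  proof (intro conjI allI impI)
    fix i assume "i < n"
    then have "a i c = (\<Sum>s<n. (if s = i then 1 else 0) * a s c)" for c
      by (simp add: sum.delta if_distrib[of "\<lambda>x. x * a _ c"] cong: if_cong)
    then show "\<exists>co. \<forall>c\<in>C. a i c = (\<Sum>s<n. co s * a s c)"
      by (intro exI[of _ "\<lambda>s. if s = i then 1 else 0"]) simp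
  qed simp
  then obtain S where S: "spanning S" and min: "\<And>T. spanning T \<Longrightarrow> card S \<le> card T"
    using ex_has_least_nat[of spanning _ card] by metis
  have fin: "finite S" using S finite_subset unfolding spanning_def by blast
  show thesis
  proof (rule that)
    show "S \<subseteq> {..<n}" "\<And>i. i < n \<Longrightarrow> \<exists>co. \<forall>c\<in>C. a i c = (\<Sum>s\<in>S. co s * a s c)"
      using S unfolding spanning_def by auto
    fix y assume dep: "\<And>c. c \<in> C \<Longrightarrow> (\<Sum>s\<in>S. y s * a s c) = 0"
    show "\<forall>s\<in>S. y s = 0"
    proof (rule ccontr)
      assume "\<not> (\<forall>s\<in>S. y s = 0)"
      then obtain s\<^sub>0 where s\<^sub>0: "s\<^sub>0 \<in> S" "y s\<^sub>0 \<noteq> 0" by blast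
      have "spanning (S - {s\<^sub>0})"
        using S lincomb_remove_dependent[OF fin s\<^sub>0 dep] unfolding spanning_def by fastforce
      moreover have "card (S - {s\<^sub>0}) < card S" using fin s\<^sub>0(1) by (rule card_Diff1_less)
      ultimately show False using min by fastforce
    qed
  qed
qed

lemma bij_betw_pick:
  assumes "finite S"
  shows "bij_betw (pick S) {..<card S} S"
proof -
  have "strict_mono_on {..<card S} (pick S)"
    by (auto simp: strict_mono_on_def intro: pick_mono_le)
  then have inj: "inj_on (pick S) {..<card S}" by (rule strict_mono_on_imp_inj_on)
  have "pick S ` {..<card S} \<subseteq> S" by (auto intro: pick_in_set_le)
  moreover have "card (pick S ` {..<card S}) = card S" using card_image[OF inj] by simp
  ultimately show ?thesis using inj assms card_subset_eq unfolding bij_betw_def by metis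
qed

lemma exists_strict_mono_independent_spanning_rows:
  fixes a :: "nat \<Rightarrow> 'c \<Rightarrow> 'a::field"
  obtains K :: nat and \<sigma> co where "strict_mono_on {..<K} \<sigma>" and "\<And>t. t < K \<Longrightarrow> \<sigma> t < n"
    and "\<And>i c. i < n \<Longrightarrow> c \<in> C \<Longrightarrow> a i c = (\<Sum>t<K. co i t * a (\<sigma> t) c)"
    and "\<And>y. (\<And>c. c \<in> C \<Longrightarrow> (\<Sum>t<K. y t * a (\<sigma> t) c) = 0) \<Longrightarrow> \<forall>t<K. y t = 0"
proof -
  obtain S where S: "S \<subseteq> {..<n}"
    and span: "\<And>i. i < n \<Longrightarrow> \<exists>co. \<forall>c\<in>C. a i c = (\<Sum>s\<in>S. co s * a s c)"
    and indpt: "\<And>y. (\<And>c. c \<in> C \<Longrightarrow> (\<Sum>s\<in>S. y s * a s c) = 0) \<Longrightarrow> \<forall>s\<in>S. y s = 0"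
    using exists_independent_spanning_rows by blast
  have fin: "finite S" using S finite_subset by blast
  have bij: "bij_betw (pick S) {..<card S} S" using bij_betw_pick[OF fin] .
  have reindex: "(\<Sum>s\<in>S. f s) = (\<Sum>t<card S. f (pick S t))" for f :: "nat \<Rightarrow> 'a"
    by (rule sum.reindex_bij_betw[OF bij, symmetric])
  obtain co where co: "\<And>i c. i < n \<Longrightarrow> c \<in> C \<Longrightarrow> a i c = (\<Sum>s\<in>S. co i s * a s c)"
    using span by metis
  show thesis
  proof (rule that[where K = "card S" and \<sigma> = "pick S" and co = "\<lambda>i t. co i (pick S t)"])
    show "strict_mono_on {..<card S} (pick S)"
      by (auto simp: strict_mono_on_def intro: pick_mono_le)
    show "\<And>t. t < card S \<Longrightarrow> pick S t < n" using S pick_in_set_le by blast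
    show "\<And>i c. i < n \<Longrightarrow> c \<in> C \<Longrightarrow> a i c = (\<Sum>t<card S. co i (pick S t) * a (pick S t) c)"
      using co reindex by simp
    fix y assume "\<And>c. c \<in> C \<Longrightarrow> (\<Sum>t<card S. y t * a (pick S t) c) = 0"
    then have "\<forall>s\<in>S. y (the_inv_into {..<card S} (pick S) s) = 0"
      using indpt[of "\<lambda>s. y (the_inv_into {..<card S} (pick S) s)"] bij
      by (simp add: reindex bij_betw_def the_inv_into_f_f)
    then show "\<forall>t<card S. y t = 0"
      using bij by (metis bij_betw_apply bij_betw_imp_inj_on lessThan_iff the_inv_into_f_f)
  qed
qed

section \<open>Fibers and mode unfoldings\<close>

definition nonzero_tensor :: "nat list \<Rightarrow> (nat list \<Rightarrow> real) \<Rightarrow> bool" where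
  "nonzero_tensor D Z \<longleftrightarrow> (\<exists>i. multi_index D i \<and> Z i \<noteq> 0)"

definition mode_ranks :: "nat list \<Rightarrow> (nat list \<Rightarrow> real) \<Rightarrow> nat list" where
  "mode_ranks D Z = map (\<lambda>n. mat_rank (mode_unfolding D Z n)) [0..<length D]"

definition mode_fiber :: "nat list \<Rightarrow> (nat list \<Rightarrow> real) \<Rightarrow> nat \<Rightarrow> nat list \<Rightarrow> real vec" where
  "mode_fiber D Z n i = vec (D ! n) (\<lambda>r. Z (i[n := r]))"

text \<open>Place value of index \<open>k\<close> in the mixed-radix column index decoded by \<open>unfold_col_index D n\<close>.\<close>

definition unfold_stride :: "nat list \<Rightarrow> nat \<Rightarrow> nat \<Rightarrow> nat" where
  "unfold_stride D n k = (\<Prod>l\<in>{..<k} - {n}. D ! l)"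

lemma multi_index_nth_less: "multi_index D i \<Longrightarrow> k < length D \<Longrightarrow> i ! k < D ! k"
  unfolding multi_index_def by blast

lemma multi_index_imp_dims_pos: "multi_index D i \<Longrightarrow> k < length D \<Longrightarrow> 0 < D ! k"
  using multi_index_nth_less by fastforce

lemma multi_index_update:
  assumes "multi_index D i" and "r < D ! k"
  shows "multi_index D (i[k := r])"
  unfolding multi_index_def
proof (intro conjI allI impI)
  show "length (i[k := r]) = length D" using assms(1) unfolding multi_index_def by simp
  fix l assume "l < length D"
  then show "i[k := r] ! l < D ! l" using assms unfolding multi_index_def by (cases "l = k") auto
qed

lemma unfold_col_index_eq: "unfold_col_index D n c k = c div unfold_stride D n k mod D ! k"
  by (simp add: unfold_col_index_def unfold_stride_def)

lemma unfold_stride_Suc: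
  "unfold_stride D n (Suc k) = (if k = n then unfold_stride D n k else unfold_stride D n k * D ! k)"
proof -
  have "{..<Suc k} - {n} = (if k = n then {..<k} - {n} else insert k ({..<k} - {n}))" by auto
  then show ?thesis by (simp add: unfold_stride_def mult.commute)
qed

lemma unfold_stride_dvd:
  assumes "k < M" and "k \<noteq> n"
  shows "unfold_stride D n k * D ! k dvd unfold_stride D n M"
proof -
  have "unfold_stride D n k * D ! k = (\<Prod>l\<in>insert k ({..<k} - {n}). D ! l)"
    by (simp add: unfold_stride_def mult.commute)
  also have "\<dots> dvd unfold_stride D n M"
    unfolding unfold_stride_def using assms by (intro prod_dvd_prod_subset) auto
  finally show ?thesis .
qed

lemma unfold_stride_pos: "(\<And>l. l < k \<Longrightarrow> l \<noteq> n \<Longrightarrow> 0 < D ! l) \<Longrightarrow> 0 < unfold_stride D n k"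
  unfolding unfold_stride_def by (auto intro: prod_pos)

lemma unfold_col_index_add_high:
  assumes "k < M" and "k \<noteq> n" and "0 < unfold_stride D n k"
  shows "unfold_col_index D n (c + x * unfold_stride D n M) k = unfold_col_index D n c k"
proof -
  obtain q where q: "unfold_stride D n M = unfold_stride D n k * D ! k * q"
    using unfold_stride_dvd[OF assms(1,2)] by (metis dvdE)
  have "(c + x * unfold_stride D n M) div unfold_stride D n k
      = (c + (x * q * D ! k) * unfold_stride D n k) div unfold_stride D n k"
    unfolding q by (simp add: mult_ac)
  also have "\<dots> = c div unfold_stride D n k + x * q * D ! k" using assms(3) by simp
  finally show ?thesis by (simp add: unfold_col_index_eq)
qed

lemma unfold_col_index_surj:
  assumes "\<And>k. k < M \<Longrightarrow> k \<noteq> n \<Longrightarrow> x k < D ! k"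
  shows "\<exists>c < unfold_stride D n M. \<forall>k<M. k \<noteq> n \<longrightarrow> unfold_col_index D n c k = x k"
  using assms
proof (induction M)
  case 0
  then show ?case by (simp add: unfold_stride_def)
next
  case (Suc M)
  let ?W = "unfold_stride D n"
  obtain c where c: "c < ?W M" and digits: "\<forall>k<M. k \<noteq> n \<longrightarrow> unfold_col_index D n c k = x k"
    using Suc by auto
  show ?case
  proof (cases "M = n")
    case True
    then show ?thesis using c digits by (auto simp: unfold_stride_Suc less_Suc_eq)
  next
    case False
    have xM: "x M < D ! M" using Suc.prems False by simp
    have pos: "0 < ?W k" if "k \<le> M" for k
    proof (rule unfold_stride_pos)
      fix l assume "l < k" "l \<noteq> n"
      then have "x l < D ! l" using Suc.prems that by simp
      then show "0 < D ! l" by simp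
    qed
    define c' where "c' = c + x M * ?W M"
    have "c' < ?W M + x M * ?W M" unfolding c'_def using c by simp
    also have "\<dots> \<le> D ! M * ?W M" using xM mult_le_mono1[of "Suc (x M)" "D ! M" "?W M"] by simp
    finally have "c' < ?W (Suc M)" using False by (simp add: unfold_stride_Suc mult.commute)
    moreover have "unfold_col_index D n c' k = x k" if k: "k < Suc M" "k \<noteq> n" for k
    proof (cases "k = M")
      case True
      have "c' div ?W M = x M" unfolding c'_def using c pos[of M] by simp
      then show ?thesis using True xM by (simp add: unfold_col_index_eq)
    next
      case False
      then have "k < M" using k by simp
      then show ?thesis
        using unfold_col_index_add_high[of k M n D c "x M"] digits k(2) pos[of k]
        unfolding c'_def by simp
    qed
    ultimately show ?thesis by blast
  qed
qed

lemma dim_row_mode_unfolding [simp]: "dim_row (mode_unfolding D Z n) = D ! n"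
  by (simp add: mode_unfolding_def)

lemma mode_unfolding_carrier:
  "mode_unfolding D Z n \<in> carrier_mat (D ! n) (unfold_stride D n (length D))"
  by (simp add: mode_unfolding_def unfold_stride_def)

lemma mode_fiber_update_same [simp]: "mode_fiber D Z n (i[n := r]) = mode_fiber D Z n i"
  by (simp add: mode_fiber_def)

lemma col_mode_unfolding:
  assumes "n < length D" and "c < unfold_stride D n (length D)"
  shows "col (mode_unfolding D Z n) c
    = mode_fiber D Z n (map (\<lambda>k. if k = n then 0 else unfold_col_index D n c k) [0..<length D])"
proof -
  have "(map (\<lambda>k. if k = n then 0 else unfold_col_index D n c k) [0..<length D])[n := r]
      = map (\<lambda>k. if k = n then r else unfold_col_index D n c k) [0..<length D]" for r
    using assms(1) by (intro nth_equalityI) auto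
  then show ?thesis
    using assms by (intro eq_vecI) (auto simp: mode_fiber_def mode_unfolding_def unfold_stride_def)
qed

lemma set_cols_mode_unfolding:
  assumes pos: "\<And>k. k < length D \<Longrightarrow> 0 < D ! k" and n: "n < length D"
  shows "set (cols (mode_unfolding D Z n)) = mode_fiber D Z n ` {i. multi_index D i}"
proof -
  let ?W = "unfold_stride D n (length D)"
  let ?idx = "\<lambda>c. map (\<lambda>k. if k = n then 0 else unfold_col_index D n c k) [0..<length D]"
  have "set (cols (mode_unfolding D Z n)) = col (mode_unfolding D Z n) ` {..<?W}"
    using mode_unfolding_carrier[of D Z n] by (simp add: cols_def atLeast0LessThan)
  also have "\<dots> = (\<lambda>c. mode_fiber D Z n (?idx c)) ` {..<?W}"
    by (rule image_cong[OF refl], rule col_mode_unfolding[OF n]) simp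
  also have "\<dots> = mode_fiber D Z n ` {i. multi_index D i}"
  proof (intro equalityI subsetI)
    fix x assume "x \<in> (\<lambda>c. mode_fiber D Z n (?idx c)) ` {..<?W}"
    then obtain c where x: "x = mode_fiber D Z n (?idx c)" by blast
    have "multi_index D (?idx c)"
      unfolding multi_index_def
    proof (intro conjI allI impI)
      fix k assume k: "k < length D"
      show "?idx c ! k < D ! k" using pos[OF k] k by (cases "k = n") (simp_all add: unfold_col_index_eq)
    qed simp
    then show "x \<in> mode_fiber D Z n ` {i. multi_index D i}" using x by blast
  next
    fix x assume "x \<in> mode_fiber D Z n ` {i. multi_index D i}"
    then obtain i where i: "multi_index D i" and x: "x = mode_fiber D Z n i" by blast
    obtain c where c: "c < ?W"
      and digits: "\<forall>k<length D. k \<noteq> n \<longrightarrow> unfold_col_index D n c k = i ! k"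
      using unfold_col_index_surj[of "length D" n "(!) i" D] i unfolding multi_index_def by blast
    have "?idx c = i[n := 0]"
    proof (rule nth_equalityI)
      show "length (?idx c) = length (i[n := 0])" using i unfolding multi_index_def by simp
      fix k assume "k < length (?idx c)"
      then show "?idx c ! k = i[n := 0] ! k" using digits i n unfolding multi_index_def
        by (cases "k = n") simp_all
    qed
    then have "x = mode_fiber D Z n (?idx c)" using x by simp
    then show "x \<in> (\<lambda>c. mode_fiber D Z n (?idx c)) ` {..<?W}" using c by blast
  qed
  finally show ?thesis .
qed

lemma mode_unfolding_cong:
  assumes "\<And>j. length j = length D \<Longrightarrow> Z j = Z' j"
  shows "mode_unfolding D Z n = mode_unfolding D Z' n"
  unfolding mode_unfolding_def using assms by (intro eq_matI) auto

lemma mode_ranks_cong: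
  assumes "\<And>j. length j = length D \<Longrightarrow> Z j = Z' j"
  shows "mode_ranks D Z = mode_ranks D Z'"
  unfolding mode_ranks_def using mode_unfolding_cong[OF assms] by simp

lemma nonzero_tensor_cong:
  assumes "\<And>j. length j = length D \<Longrightarrow> Z j = Z' j"
  shows "nonzero_tensor D Z \<longleftrightarrow> nonzero_tensor D Z'"
  unfolding nonzero_tensor_def multi_index_def using assms by auto

definition restrict_mode :: "nat \<Rightarrow> (nat \<Rightarrow> nat) \<Rightarrow> (nat list \<Rightarrow> real) \<Rightarrow> nat list \<Rightarrow> real" where
  "restrict_mode m \<sigma> Z j = Z (j[m := \<sigma> (j ! m)])"

lemma mode_fiber_restrict_mode_same:
  assumes "m < length D" and "m < length j"
  shows "mode_fiber (D[m := K]) (restrict_mode m \<sigma> Z) m j = vec K (\<lambda>t. Z (j[m := \<sigma> t]))"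
  using assms by (intro eq_vecI) (auto simp: mode_fiber_def restrict_mode_def)

lemma mode_fiber_restrict_mode_other:
  assumes "k \<noteq> m"
  shows "mode_fiber (D[m := K]) (restrict_mode m \<sigma> Z) k j = mode_fiber D Z k (j[m := \<sigma> (j ! m)])"
  using assms by (intro eq_vecI) (auto simp: mode_fiber_def restrict_mode_def list_update_swap)

definition subtensor :: "nat \<Rightarrow> (nat \<Rightarrow> nat \<Rightarrow> nat) \<Rightarrow> (nat list \<Rightarrow> real) \<Rightarrow> nat list \<Rightarrow> real" where
  "subtensor N s X = (\<lambda>j. X (map (\<lambda>k. s k (j ! k)) [0..<N]))"

lemma subtensor_id: "length j = N \<Longrightarrow> subtensor N (\<lambda>_. id) X j = X j"
  unfolding subtensor_def using map_nth[of j] by simp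

lemma restrict_mode_subtensor:
  assumes "length j = N" and "m < N" and "s m = id"
  shows "restrict_mode m \<sigma> (subtensor N s X) j = subtensor N (s(m := \<sigma>)) X j"
  unfolding restrict_mode_def subtensor_def using assms
  by (intro arg_cong[where f = X] nth_equalityI) auto

section \<open>Restricting one mode to a basis of slices\<close>

locale mode_slice_basis =
  fixes D :: "nat list" and Z :: "nat list \<Rightarrow> real" and m K :: nat
    and \<sigma> :: "nat \<Rightarrow> nat" and co :: "nat \<Rightarrow> nat \<Rightarrow> real"
  assumes nonzero: "nonzero_tensor D Z"
    and mode: "m < length D"
    and slice_range: "\<And>t. t < K \<Longrightarrow> \<sigma> t < D ! m"
    and slices_span: "\<And>i. multi_index D i \<Longrightarrow> Z i = (\<Sum>t<K. co (i ! m) t * Z (i[m := \<sigma> t]))"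
    and slices_indpt: "\<And>y. (\<And>i. multi_index D i \<Longrightarrow> (\<Sum>t<K. y t * Z (i[m := \<sigma> t])) = 0) \<Longrightarrow>
      \<forall>t<K. y t = 0"
begin

lemma dims_pos: "k < length D \<Longrightarrow> 0 < D ! k"
  using nonzero multi_index_imp_dims_pos unfolding nonzero_tensor_def by blast

lemma multi_index_unselect:
  assumes i: "multi_index D i" and t: "t < K"
  shows "multi_index (D[m := K]) (i[m := t])"
  unfolding multi_index_def
proof (intro conjI allI impI)
  show "length (i[m := t]) = length (D[m := K])" using i unfolding multi_index_def by simp
  fix k assume k: "k < length (D[m := K])"
  show "i[m := t] ! k < D[m := K] ! k"
    using i t k unfolding multi_index_def by (cases "k = m") simp_all
qed

lemma multi_index_restrict:
  assumes j: "multi_index (D[m := K]) j"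
  shows "multi_index D (j[m := \<sigma> (j ! m)])"
  unfolding multi_index_def
proof (intro conjI allI impI)
  show "length (j[m := \<sigma> (j ! m)]) = length D" using j unfolding multi_index_def by simp
  fix k assume k: "k < length D"
  have "j ! k < D[m := K] ! k" using j k unfolding multi_index_def by simp
  then show "j[m := \<sigma> (j ! m)] ! k < D ! k"
    using j k mode slice_range unfolding multi_index_def by (cases "k = m") simp_all
qed

lemma nonzero_restrict: "nonzero_tensor (D[m := K]) (restrict_mode m \<sigma> Z)"
proof -
  obtain i where i: "multi_index D i" "Z i \<noteq> 0"
    using nonzero unfolding nonzero_tensor_def by blast
  then have "(\<Sum>t<K. co (i ! m) t * Z (i[m := \<sigma> t])) \<noteq> 0" using slices_span[OF i(1)] by argo
  then obtain t where "t \<in> {..<K}" and "co (i ! m) t * Z (i[m := \<sigma> t]) \<noteq> 0"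
    by (rule sum.not_neutral_contains_not_neutral)
  then have t: "t < K" "Z (i[m := \<sigma> t]) \<noteq> 0" by simp_all
  have "restrict_mode m \<sigma> Z (i[m := t]) = Z (i[m := \<sigma> t])"
    using i(1) mode unfolding restrict_mode_def multi_index_def by simp
  then show ?thesis
    using multi_index_unselect[OF i(1) t(1)] t(2) unfolding nonzero_tensor_def
    by (intro exI[of _ "i[m := t]"]) simp
qed

lemma set_cols_restrict_mode_unfolding:
  assumes "k < length D"
  shows "set (cols (mode_unfolding (D[m := K]) (restrict_mode m \<sigma> Z) k))
    = mode_fiber (D[m := K]) (restrict_mode m \<sigma> Z) k ` {j. multi_index (D[m := K]) j}"
proof -
  have "\<And>l. l < length (D[m := K]) \<Longrightarrow> 0 < D[m := K] ! l"
    using nonzero_restrict multi_index_imp_dims_pos unfolding nonzero_tensor_def by blast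
  from set_cols_mode_unfolding[OF this, of k] show ?thesis using assms by simp
qed

lemma card_pos: "0 < K"
proof -
  obtain j where "multi_index (D[m := K]) j"
    using nonzero_restrict unfolding nonzero_tensor_def by blast
  then have "j ! m < D[m := K] ! m" using mode by (intro multi_index_nth_less) simp_all
  then show ?thesis using mode by simp
qed

lemma mode_fiber_same_lincomb:
  assumes "multi_index D i"
  shows "mode_fiber D Z m i = mat (D ! m) K (\<lambda>(r, t). co r t) *\<^sub>v vec K (\<lambda>t. Z (i[m := \<sigma> t]))"
proof (rule eq_vecI)
  fix r assume "r < dim_vec (mat (D ! m) K (\<lambda>(r, t). co r t) *\<^sub>v vec K (\<lambda>t. Z (i[m := \<sigma> t])))"
  then have r: "r < D ! m" by simp
  have "multi_index D (i[m := r])" using multi_index_update[OF assms r] .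
  from slices_span[OF this] have "Z (i[m := r]) = (\<Sum>t<K. co r t * Z (i[m := \<sigma> t]))"
    using assms mode unfolding multi_index_def by simp
  then show "mode_fiber D Z m i $ r = (mat (D ! m) K (\<lambda>(r, t). co r t) *\<^sub>v vec K (\<lambda>t. Z (i[m := \<sigma> t]))) $ r"
    using r by (simp add: mode_fiber_def scalar_prod_def lessThan_atLeast0)
qed (simp add: mode_fiber_def)

lemma mode_fiber_other_lincomb:
  assumes i: "multi_index D i" and k: "k \<noteq> m"
  shows "mode_fiber D Z k i
    = mat_of_cols (D ! k) (map (\<lambda>t. mode_fiber D Z k (i[m := \<sigma> t])) [0..<K]) *\<^sub>v vec K (co (i ! m))"
proof (rule eq_vecI)
  fix r assume "r < dim_vec (mat_of_cols (D ! k) (map (\<lambda>t. mode_fiber D Z k (i[m := \<sigma> t])) [0..<K])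
    *\<^sub>v vec K (co (i ! m)))"
  then have r: "r < D ! k" by simp
  have "multi_index D (i[k := r])" using multi_index_update[OF i r] .
  from slices_span[OF this] have "Z (i[k := r]) = (\<Sum>t<K. co (i ! m) t * Z (i[m := \<sigma> t, k := r]))"
    using k by (simp add: list_update_swap)
  then show "mode_fiber D Z k i $ r = (mat_of_cols (D ! k) (map (\<lambda>t. mode_fiber D Z k (i[m := \<sigma> t])) [0..<K])
    *\<^sub>v vec K (co (i ! m))) $ r"
    using r by (simp add: mode_fiber_def mat_of_cols_def scalar_prod_def lessThan_atLeast0 mult.commute)
qed (simp add: mode_fiber_def)

lemma rank_mode_unfolding_le: "mat_rank (mode_unfolding D Z m) \<le> K"
proof -
  interpret vec_space "TYPE(real)" "D ! m" .
  define Q where "Q = mat (D ! m) K (\<lambda>(r, t). co r t)"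
  have Q: "Q \<in> carrier_mat (D ! m) K" unfolding Q_def by simp
  have "set (cols (mode_unfolding D Z m)) \<subseteq> span (set (cols Q))"
  proof
    fix x assume "x \<in> set (cols (mode_unfolding D Z m))"
    then obtain i where "multi_index D i" and "x = mode_fiber D Z m i"
      using set_cols_mode_unfolding[OF dims_pos mode] by blast
    then show "x \<in> span (set (cols Q))"
      using mode_fiber_same_lincomb mult_mat_vec_in_span_cols[OF Q] unfolding Q_def by simp
  qed
  then have "rank (mode_unfolding D Z m) \<le> rank Q"
    using rank_le_of_cols_subset_span[OF mode_unfolding_carrier Q] by simp
  also have "\<dots> \<le> K" using rank_le_nc[OF Q] .
  finally show ?thesis unfolding mat_rank_def by simp
qed

lemma card_le_rank_mode_unfolding: "K \<le> mat_rank (mode_unfolding D Z m)"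
  unfolding mat_rank_def dim_row_mode_unfolding
proof (rule card_le_rank_if_rows_indpt[OF mode_unfolding_carrier slice_range])
  fix v :: "real vec" assume v: "v \<in> carrier_vec K"
    and zero: "\<And>x. x \<in> set (cols (mode_unfolding D Z m)) \<Longrightarrow> (\<Sum>t<K. v $ t * x $ \<sigma> t) = 0"
  have "(\<Sum>t<K. v $ t * Z (i[m := \<sigma> t])) = 0" if i: "multi_index D i" for i
  proof -
    have "(\<Sum>t<K. v $ t * Z (i[m := \<sigma> t])) = (\<Sum>t<K. v $ t * mode_fiber D Z m i $ \<sigma> t)"
      by (intro sum.cong) (simp_all add: mode_fiber_def slice_range)
    also have "\<dots> = 0" using zero set_cols_mode_unfolding[OF dims_pos mode] i by blast
    finally show ?thesis .
  qed
  then have "\<forall>t<K. v $ t = 0" using slices_indpt[of "\<lambda>t. v $ t"] by blast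
  then show "v = 0\<^sub>v K" using v by (intro eq_vecI) auto
qed

lemma rank_restrict_mode_unfolding_same:
  "mat_rank (mode_unfolding (D[m := K]) (restrict_mode m \<sigma> Z) m) = K"
proof -
  let ?B = "mode_unfolding (D[m := K]) (restrict_mode m \<sigma> Z) m"
  have B: "?B \<in> carrier_mat K (unfold_stride (D[m := K]) m (length D))"
    using mode_unfolding_carrier[of "D[m := K]" _ m] mode by simp
  have "K \<le> vec_space.rank K ?B"
  proof (rule card_le_rank_if_rows_indpt[OF B, where \<sigma> = id])
    fix v :: "real vec" assume v: "v \<in> carrier_vec K"
      and zero: "\<And>x. x \<in> set (cols ?B) \<Longrightarrow> (\<Sum>t<K. v $ t * x $ id t) = 0"
    have "(\<Sum>t<K. v $ t * Z (i[m := \<sigma> t])) = 0" if i: "multi_index D i" for i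
    proof -
      have j: "multi_index (D[m := K]) (i[m := 0])" using multi_index_unselect[OF i card_pos] .
      have fiber: "mode_fiber (D[m := K]) (restrict_mode m \<sigma> Z) m (i[m := 0]) = vec K (\<lambda>t. Z (i[m := \<sigma> t]))"
        using mode_fiber_restrict_mode_same[OF mode] i mode unfolding multi_index_def by simp
      have "mode_fiber (D[m := K]) (restrict_mode m \<sigma> Z) m (i[m := 0]) \<in> set (cols ?B)"
        using set_cols_restrict_mode_unfolding[OF mode] j by blast
      from zero[OF this] show ?thesis unfolding fiber by simp
    qed
    then have "\<forall>t<K. v $ t = 0" using slices_indpt[of "\<lambda>t. v $ t"] by blast
    then show "v = 0\<^sub>v K" using v by (intro eq_vecI) auto
  qed simp
  moreover have "vec_space.rank K ?B \<le> K" using vec_space.rank_le_dim_row[OF B] .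
  ultimately show ?thesis unfolding mat_rank_def using mode by simp
qed

lemma mode_fiber_in_span_restrict:
  assumes i: "multi_index D i" and k: "k < length D" "k \<noteq> m"
  shows "mode_fiber D Z k i
    \<in> LinearCombinations.module.span class_ring (module_vec TYPE(real) (D ! k))
        (set (cols (mode_unfolding (D[m := K]) (restrict_mode m \<sigma> Z) k)))"
proof -
  interpret vec_space "TYPE(real)" "D ! k" .
  let ?B = "mode_unfolding (D[m := K]) (restrict_mode m \<sigma> Z) k"
  let ?G = "mat_of_cols (D ! k) (map (\<lambda>t. mode_fiber D Z k (i[m := \<sigma> t])) [0..<K])"
  have G: "?G \<in> carrier_mat (D ! k) K" by (intro carrier_matI) (simp_all add: mat_of_cols_def)
  note cols_B = set_cols_restrict_mode_unfolding[OF k(1)]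
  have fibers_B: "mode_fiber D Z k (i[m := \<sigma> t]) \<in> set (cols ?B)" if t: "t < K" for t
  proof -
    have "mode_fiber D Z k (i[m := \<sigma> t]) = mode_fiber (D[m := K]) (restrict_mode m \<sigma> Z) k (i[m := t])"
      using mode_fiber_restrict_mode_other[OF k(2)] i mode unfolding multi_index_def by simp
    then show ?thesis using multi_index_unselect[OF i t] unfolding cols_B by blast
  qed
  have "cols ?G = map (\<lambda>t. mode_fiber D Z k (i[m := \<sigma> t])) [0..<K]"
    by (rule cols_mat_of_cols) (auto simp: mode_fiber_def)
  then have "set (cols ?G) \<subseteq> set (cols ?B)" using fibers_B by auto
  moreover have "mode_fiber D Z k i \<in> span (set (cols ?G))"
    unfolding mode_fiber_other_lincomb[OF i k(2)] by (rule mult_mat_vec_in_span_cols[OF G]) simp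
  ultimately show ?thesis using span_is_monotone by blast
qed

lemma rank_restrict_mode_unfolding_other:
  assumes k: "k < length D" "k \<noteq> m"
  shows "mat_rank (mode_unfolding (D[m := K]) (restrict_mode m \<sigma> Z) k) = mat_rank (mode_unfolding D Z k)"
proof -
  interpret vec_space "TYPE(real)" "D ! k" .
  let ?A = "mode_unfolding D Z k" and ?B = "mode_unfolding (D[m := K]) (restrict_mode m \<sigma> Z) k"
  have A: "?A \<in> carrier_mat (D ! k) (unfold_stride D k (length D))" by (rule mode_unfolding_carrier)
  have B: "?B \<in> carrier_mat (D ! k) (unfold_stride (D[m := K]) k (length D))"
    using mode_unfolding_carrier[of "D[m := K]" _ k] k by simp
  have cols_A: "set (cols ?A) = mode_fiber D Z k ` {i. multi_index D i}"
    using set_cols_mode_unfolding[OF dims_pos k(1)] .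
  note cols_B = set_cols_restrict_mode_unfolding[OF k(1)]
  have "set (cols ?B) \<subseteq> set (cols ?A)"
  proof
    fix x assume "x \<in> set (cols ?B)"
    then obtain j where j: "multi_index (D[m := K]) j"
      and "x = mode_fiber (D[m := K]) (restrict_mode m \<sigma> Z) k j"
      unfolding cols_B by blast
    then have "x = mode_fiber D Z k (j[m := \<sigma> (j ! m)])"
      using mode_fiber_restrict_mode_other[OF k(2)] by simp
    then show "x \<in> set (cols ?A)" unfolding cols_A using multi_index_restrict[OF j] by blast
  qed
  moreover have "set (cols ?A) \<subseteq> span (set (cols ?A))"
    using cols_dim[of ?A] by (intro in_own_span) simp
  ultimately have "rank ?B \<le> rank ?A"
    using rank_le_of_cols_subset_span[OF B A] by (meson subset_trans)
  moreover have "rank ?A \<le> rank ?B"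
    using rank_le_of_cols_subset_span[OF A B] mode_fiber_in_span_restrict[OF _ k] unfolding cols_A by blast
  ultimately show ?thesis using k unfolding mat_rank_def by simp
qed

lemma mode_rank_eq_card: "mode_ranks D Z ! m = K"
  using rank_mode_unfolding_le card_le_rank_mode_unfolding mode by (simp add: mode_ranks_def)

lemma mode_ranks_restrict: "mode_ranks (D[m := K]) (restrict_mode m \<sigma> Z) = mode_ranks D Z"
proof (rule nth_equalityI)
  fix k assume "k < length (mode_ranks (D[m := K]) (restrict_mode m \<sigma> Z))"
  then have k: "k < length D" by (simp add: mode_ranks_def)
  show "mode_ranks (D[m := K]) (restrict_mode m \<sigma> Z) ! k = mode_ranks D Z ! k"
  proof (cases "k = m")
    case True
    then show ?thesis using rank_restrict_mode_unfolding_same mode_rank_eq_card k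
      by (simp add: mode_ranks_def)
  next
    case False
    then show ?thesis using rank_restrict_mode_unfolding_other k by (simp add: mode_ranks_def)
  qed
qed (simp add: mode_ranks_def)

end

lemma mode_slice_basis_exists:
  assumes "nonzero_tensor D Z" and "m < length D"
  obtains K \<sigma> co where "strict_mono_on {..<K} \<sigma>" and "mode_slice_basis D Z m K \<sigma> co"
proof (rule exists_strict_mono_independent_spanning_rows[of "D ! m" "{i. multi_index D i}"
    "\<lambda>r i. Z (i[m := r])"])
  fix K :: nat and \<sigma> co
  assume mono: "strict_mono_on {..<K} \<sigma>" and range: "\<And>t. t < K \<Longrightarrow> \<sigma> t < D ! m"
    and span: "\<And>r i. r < D ! m \<Longrightarrow> i \<in> {i. multi_index D i} \<Longrightarrow>
      Z (i[m := r]) = (\<Sum>t<K. co r t * Z (i[m := \<sigma> t]))"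
    and indpt: "\<And>y. (\<And>i. i \<in> {i. multi_index D i} \<Longrightarrow> (\<Sum>t<K. y t * Z (i[m := \<sigma> t])) = 0) \<Longrightarrow>
      \<forall>t<K. y t = 0"
  have "mode_slice_basis D Z m K \<sigma> co"
  proof
    show "nonzero_tensor D Z" and "m < length D" by (fact assms)+
    show "\<And>t. t < K \<Longrightarrow> \<sigma> t < D ! m" by (fact range)
    fix i assume i: "multi_index D i"
    then show "Z i = (\<Sum>t<K. co (i ! m) t * Z (i[m := \<sigma> t]))"
      using span[of "i ! m" i] assms(2) unfolding multi_index_def by simp
  next
    fix y assume "\<And>i. multi_index D i \<Longrightarrow> (\<Sum>t<K. y t * Z (i[m := \<sigma> t])) = 0"
    then show "\<forall>t<K. y t = 0" using indpt by simp
  qed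
  then show thesis using mono that by blast
qed

section \<open>Reducing all modes\<close>

lemma reduce_mode_of_subtensor:
  assumes nonzero: "nonzero_tensor D (subtensor N s X)" and m: "m < length D"
    and N: "length D = N" and s_m: "s m = id"
  obtains \<sigma> where "strict_mono_on {..<mode_ranks D (subtensor N s X) ! m} \<sigma>"
    and "\<forall>t<mode_ranks D (subtensor N s X) ! m. \<sigma> t < D ! m"
    and "nonzero_tensor (D[m := mode_ranks D (subtensor N s X) ! m]) (subtensor N (s(m := \<sigma>)) X)"
    and "mode_ranks (D[m := mode_ranks D (subtensor N s X) ! m]) (subtensor N (s(m := \<sigma>)) X)
      = mode_ranks D (subtensor N s X)"
proof -
  obtain K \<sigma> co where \<sigma>: "strict_mono_on {..<K} \<sigma>"
    and basis: "mode_slice_basis D (subtensor N s X) m K \<sigma> co"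
    using mode_slice_basis_exists[OF nonzero m] .
  interpret mode_slice_basis D "subtensor N s X" m K \<sigma> co by (fact basis)
  have K: "mode_ranks D (subtensor N s X) ! m = K" by (rule mode_rank_eq_card)
  have restrict: "restrict_mode m \<sigma> (subtensor N s X) j = subtensor N (s(m := \<sigma>)) X j"
    if "length j = length (D[m := K])" for j
    using restrict_mode_subtensor[of j N m s] that m N s_m by simp
  show thesis
  proof (rule that)
    show "strict_mono_on {..<mode_ranks D (subtensor N s X) ! m} \<sigma>" using \<sigma> K by simp
    show "\<forall>t<mode_ranks D (subtensor N s X) ! m. \<sigma> t < D ! m" using slice_range K by simp
    show "nonzero_tensor (D[m := mode_ranks D (subtensor N s X) ! m]) (subtensor N (s(m := \<sigma>)) X)"
      using nonzero_restrict nonzero_tensor_cong[OF restrict] K by simp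
    show "mode_ranks (D[m := mode_ranks D (subtensor N s X) ! m]) (subtensor N (s(m := \<sigma>)) X)
      = mode_ranks D (subtensor N s X)"
      using mode_ranks_restrict mode_ranks_cong[OF restrict] K by simp
  qed
qed

lemma take_append_drop_update_nth:
  assumes "length R = length D" and "m < length D"
  shows "(take m R @ drop m D)[m := R ! m] = take (Suc m) R @ drop (Suc m) D"
  using assms by (simp add: take_Suc_conv_app_nth Cons_nth_drop_Suc[symmetric] list_update_append)

definition first_modes_reduced :: "nat list \<Rightarrow> (nat list \<Rightarrow> real) \<Rightarrow> nat \<Rightarrow> (nat \<Rightarrow> nat \<Rightarrow> nat) \<Rightarrow> bool"
  where "first_modes_reduced D X m s \<longleftrightarrow>
    (\<forall>k<m. strict_mono_on {..<mode_ranks D X ! k} (s k) \<and> (\<forall>j<mode_ranks D X ! k. s k j < D ! k)) \<and>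
    (\<forall>k\<ge>m. s k = id) \<and>
    nonzero_tensor (take m (mode_ranks D X) @ drop m D) (subtensor (length D) s X) \<and>
    mode_ranks (take m (mode_ranks D X) @ drop m D) (subtensor (length D) s X) = mode_ranks D X"

lemma first_modes_reduced_0:
  assumes "nonzero_tensor D X"
  shows "first_modes_reduced D X 0 (\<lambda>_. id)"
proof -
  have id: "\<And>j. length j = length D \<Longrightarrow> subtensor (length D) (\<lambda>_. id) X j = X j"
    by (rule subtensor_id)
  have "nonzero_tensor D (subtensor (length D) (\<lambda>_. id) X)"
    using assms nonzero_tensor_cong[of D "subtensor (length D) (\<lambda>_. id) X" X, OF id] by blast
  moreover have "mode_ranks D (subtensor (length D) (\<lambda>_. id) X) = mode_ranks D X"
    by (rule mode_ranks_cong[of D "subtensor (length D) (\<lambda>_. id) X" X, OF id])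
  ultimately show ?thesis unfolding first_modes_reduced_def by simp
qed

lemma first_modes_reduced_Suc:
  assumes reduced: "first_modes_reduced D X m s" and m: "m < length D"
  shows "\<exists>\<sigma>. first_modes_reduced D X (Suc m) (s(m := \<sigma>))"
proof -
  let ?R = "mode_ranks D X" and ?N = "length D"
  define Dm where "Dm = take m ?R @ drop m D"
  have len_R: "length ?R = ?N" by (simp add: mode_ranks_def)
  have m': "m < length Dm" and len_Dm: "length Dm = ?N" and Dm_m: "Dm ! m = D ! m"
    using m len_R unfolding Dm_def by (simp_all add: nth_append)
  have s: "\<forall>k<m. strict_mono_on {..<?R ! k} (s k) \<and> (\<forall>j<?R ! k. s k j < D ! k)"
    and s_id: "\<forall>k\<ge>m. s k = id" and nonzero_m: "nonzero_tensor Dm (subtensor ?N s X)"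
    and ranks_m: "mode_ranks Dm (subtensor ?N s X) = ?R"
    using reduced unfolding first_modes_reduced_def Dm_def by blast+
  obtain \<sigma> where \<sigma>: "strict_mono_on {..<?R ! m} \<sigma>" and \<sigma>_range: "\<forall>t<?R ! m. \<sigma> t < D ! m"
    and nonzero': "nonzero_tensor (Dm[m := ?R ! m]) (subtensor ?N (s(m := \<sigma>)) X)"
    and ranks': "mode_ranks (Dm[m := ?R ! m]) (subtensor ?N (s(m := \<sigma>)) X) = ?R"
    using reduce_mode_of_subtensor[OF nonzero_m m' len_Dm] s_id unfolding ranks_m Dm_m by blast
  have Dm_Suc: "Dm[m := ?R ! m] = take (Suc m) ?R @ drop (Suc m) D"
    using take_append_drop_update_nth[OF len_R m] unfolding Dm_def .
  have "first_modes_reduced D X (Suc m) (s(m := \<sigma>))"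
    unfolding first_modes_reduced_def Dm_Suc[symmetric]
  proof (intro conjI)
    show "\<forall>k<Suc m. strict_mono_on {..<?R ! k} ((s(m := \<sigma>)) k) \<and>
        (\<forall>j<?R ! k. (s(m := \<sigma>)) k j < D ! k)"
      using s \<sigma> \<sigma>_range by (simp add: less_Suc_eq)
    show "\<forall>k\<ge>Suc m. (s(m := \<sigma>)) k = id" using s_id by simp
  qed (fact nonzero' ranks')+
  then show ?thesis by blast
qed

lemma exists_first_modes_reduced:
  assumes "nonzero_tensor D X" and "m \<le> length D"
  shows "\<exists>s. first_modes_reduced D X m s"
  using assms(2)
proof (induction m)
  case 0
  show ?case using first_modes_reduced_0[OF assms(1)] by blast
next
  case (Suc m)
  then obtain s where "first_modes_reduced D X m s" by (meson Suc_leD)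
  moreover have "m < length D" using Suc.prems by simp
  ultimately show ?case using first_modes_reduced_Suc by blast
qed

theorem proposition3p5:
  fixes dims :: "nat list" and X :: "nat list \<Rightarrow> real"
  assumes nonzero: "\<exists>i. multi_index dims i \<and> X i \<noteq> 0"
  shows "\<exists>s :: nat \<Rightarrow> nat \<Rightarrow> nat.
     (\<forall>n<length dims.
        strict_mono_on {..<mat_rank (mode_unfolding dims X n)} (s n) \<and>
        (\<forall>j<mat_rank (mode_unfolding dims X n). s n j < dims ! n)) \<and>
     (let R = map (\<lambda>n. mat_rank (mode_unfolding dims X n)) [0..<length dims];
          Y = (\<lambda>j. X (map (\<lambda>k. s k (j ! k)) [0..<length dims]))
      in \<forall>n<length dims. mat_rank (mode_unfolding R Y n) = R ! n)"
proof -
  let ?R = "mode_ranks dims X"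
  obtain s where s: "first_modes_reduced dims X (length dims) s"
    using exists_first_modes_reduced[of dims X "length dims"] nonzero
    unfolding nonzero_tensor_def by blast
  have len_R: "length ?R = length dims" by (simp add: mode_ranks_def)
  then have mono: "\<forall>n<length dims. strict_mono_on {..<?R ! n} (s n) \<and> (\<forall>j<?R ! n. s n j < dims ! n)"
    and ranks: "mode_ranks ?R (subtensor (length dims) s X) = ?R"
    using s unfolding first_modes_reduced_def by simp_all
  show ?thesis
  proof (intro exI conjI)
    show "\<forall>n<length dims. strict_mono_on {..<mat_rank (mode_unfolding dims X n)} (s n) \<and>
        (\<forall>j<mat_rank (mode_unfolding dims X n). s n j < dims ! n)"
      using mono by (simp add: mode_ranks_def)
    show "let R = map (\<lambda>n. mat_rank (mode_unfolding dims X n)) [0..<length dims];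
          Y = (\<lambda>j. X (map (\<lambda>k. s k (j ! k)) [0..<length dims]))
      in \<forall>n<length dims. mat_rank (mode_unfolding R Y n) = R ! n"
      unfolding Let_def mode_ranks_def[of dims X, symmetric]
    proof (intro allI impI)
      fix n assume "n < length dims"
      then show "mat_rank (mode_unfolding ?R (\<lambda>j. X (map (\<lambda>k. s k (j ! k)) [0..<length dims])) n) = ?R ! n"
        using arg_cong[OF ranks, of "\<lambda>l. l ! n"] len_R by (simp add: mode_ranks_def subtensor_def)
    qed
  qed
qed

end
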